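(* Let $\Lambda$ be a full-rank lattice in $\mathbb{R}^n$ with successive minima $\lambda_1,\dots,\lambda_n$. Then there exists a basis $\boldsymbol{v}^1,\dots,\boldsymbol{v}^n$ of $\Lambda$ such that (i) $|\boldsymbol{v}^s|_2\ll_n\lambda_s$ for $s=1,\dots,n$ (implied constant depending only on $n$); and (ii) $\mathfrak{I}(\boldsymbol{v}^s)\subseteq\mathfrak{I}(\boldsymbol{v}^{s+1})$ for $s=1,\dots,n-1$.
   Context: For $\boldsymbol{v}\in\mathbb{R}^n$, $\mathfrak{I}(\boldsymbol{v}):=\{h\in\{1,\dots,n\}:v_h\neq0\}$ is the set of indices of nonzero coordinates. $|\cdot|_2$ is the Euclidean norm. The $s$-th successive minimum of $\Lambda$ is the infimum of $r>0$ such that $\Lambda\cap B(\boldsymbol{0},r)$ contains $s$ linearly independent vectors. A basis of $\Lambda$ means linearly independent vectors generating $\Lambda$ as an abelian group. *)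

theory Defs
  imports "HOL-Analysis.Analysis"
begin

definition lattice_basis :: "(real ^ 'n) set \<Rightarrow> (nat \<Rightarrow> real ^ 'n) \<Rightarrow> bool" where
  "lattice_basis L v \<longleftrightarrow>
     card (v ` {1..CARD('n)}) = CARD('n) \<and> independent (v ` {1..CARD('n)}) \<and>
     L = {(\<Sum>s=1..CARD('n). of_int (c s) *\<^sub>R v s) | c :: nat \<Rightarrow> int. True}"

definition full_rank_lattice :: "(real ^ 'n) set \<Rightarrow> bool" where
  "full_rank_lattice L \<longleftrightarrow> (\<exists>v. lattice_basis L v)"

definition succ_min :: "(real ^ 'n) set \<Rightarrow> nat \<Rightarrow> real" where
  "succ_min L s = Inf {r. r > 0 \<and> (\<exists>S. S \<subseteq> L \<inter> ball 0 r \<and> independent S \<and> card S = s)}"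

definition nz_idx :: "real ^ 'n \<Rightarrow> 'n set" where
  "nz_idx x = {i. x $ i \<noteq> 0}"

end

theory Submission
  imports Defs
begin

(* Pick linearly independent lattice vectors u 1, ..., u n with |u s| < 2 \<lambda>_s and let
   V_s = span {u 1, ..., u s}.  The s-th coordinates (with respect to u) of the lattice points
   in V_s form a discrete subgroup of the reals containing 1, hence are the integer multiples of
   some 0 < t_s <= 1, and lattice points v s in V_s with s-th coordinate t_s form a basis of
   the lattice.  Reducing v s modulo u 1, ..., u (s - 1) gives |v s| <= |u 1| + ... + |u s|
   <= 2 n \<lambda>_s; adding m v (s - 1) for a suitable m in {0..n} (each nonzero coordinate of
   v (s - 1) rules out at most one m) makes the support of v s contain that of v (s - 1).
   Then |v s| <= 2 n \<lambda>_s + n |v (s - 1)|, so |v s| <= (3 n)^s \<lambda>_s. *)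

section \<open>Coordinates with respect to a basis\<close>

definition indexed_basis :: "(nat \<Rightarrow> real ^ 'n) \<Rightarrow> bool" where
  "indexed_basis u \<longleftrightarrow> inj_on u {1..CARD('n)} \<and> independent (u ` {1..CARD('n)})"

definition coord :: "(nat \<Rightarrow> real ^ 'n) \<Rightarrow> real ^ 'n \<Rightarrow> nat \<Rightarrow> real" where
  "coord u x i = representation (u ` {1..CARD('n)}) x (u i)"

lemma lattice_basis_iff:
  fixes b :: "nat \<Rightarrow> real ^ 'n"
  shows "lattice_basis L b \<longleftrightarrow>
     indexed_basis b \<and> L = {(\<Sum>s=1..CARD('n). of_int (c s) *\<^sub>R b s) | c :: nat \<Rightarrow> int. True}"
  by (auto simp: lattice_basis_def indexed_basis_def inj_on_iff_eq_card)

lemma indexed_basis_span: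
  fixes u :: "nat \<Rightarrow> real ^ 'n"
  assumes "indexed_basis u"
  shows "span (u ` {1..CARD('n)}) = UNIV"
proof -
  have "UNIV \<subseteq> span (u ` {1..CARD('n)})"
    using assms by (intro card_ge_dim_independent) (auto simp: indexed_basis_def card_image)
  then show ?thesis by auto
qed

lemma indexed_basis_if_spanning:
  fixes v :: "nat \<Rightarrow> real ^ 'n"
  assumes "span (v ` {1..CARD('n)}) = UNIV"
  shows "indexed_basis v"
proof -
  have "CARD('n) \<le> card (v ` {1..CARD('n)})"
    using span_card_ge_dim[of "v ` {1..CARD('n)}" UNIV] assms by simp
  moreover have "card (v ` {1..CARD('n)}) \<le> CARD('n)"
    using card_image_le[of "{1..CARD('n)}" v] by simp
  ultimately have "card (v ` {1..CARD('n)}) = CARD('n)" by simp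
  then show ?thesis
    using card_le_dim_spanning[of "v ` {1..CARD('n)}" UNIV] assms
    by (auto simp: indexed_basis_def inj_on_iff_eq_card)
qed

lemma coord_zero: "coord u 0 i = 0"
  by (simp add: coord_def representation_zero)

context
  fixes u :: "nat \<Rightarrow> real ^ 'n"
  assumes u: "indexed_basis u"
begin

private lemma basis_independent: "independent (u ` {1..CARD('n)})"
  using u by (simp add: indexed_basis_def)

lemma coord_add: "coord u (x + y) i = coord u x i + coord u y i"
  using basis_independent indexed_basis_span[OF u] by (simp add: coord_def representation_add)

lemma coord_diff: "coord u (x - y) i = coord u x i - coord u y i"
  using basis_independent indexed_basis_span[OF u] by (simp add: coord_def representation_diff)

lemma coord_scaleR: "coord u (r *\<^sub>R x) i = r * coord u x i"
  using basis_independent indexed_basis_span[OF u] by (simp add: coord_def representation_scale)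

lemma coord_sum: "coord u (\<Sum>j\<in>J. x j) i = (\<Sum>j\<in>J. coord u (x j) i)"
  using basis_independent indexed_basis_span[OF u] by (simp add: coord_def representation_sum)

lemma coord_basis:
  assumes "i \<in> {1..CARD('n)}" "j \<in> {1..CARD('n)}"
  shows "coord u (u j) i = (if i = j then 1 else 0)"
  using basis_independent assms u
  by (auto simp: coord_def representation_basis indexed_basis_def dest: inj_onD)

lemma coord_expansion: "x = (\<Sum>i=1..CARD('n). coord u x i *\<^sub>R u i)"
proof -
  have "x = (\<Sum>b\<in>u ` {1..CARD('n)}. representation (u ` {1..CARD('n)}) x b *\<^sub>R b)"
    using basis_independent indexed_basis_span[OF u] by (simp add: sum_representation_eq)
  also have "\<dots> = (\<Sum>i=1..CARD('n). coord u x i *\<^sub>R u i)"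
    using u by (simp add: sum.reindex indexed_basis_def coord_def)
  finally show ?thesis .
qed

lemma coord_combination:
  assumes "i \<in> {1..CARD('n)}"
  shows "coord u (\<Sum>j=1..CARD('n). c j *\<^sub>R u j) i = c i"
proof -
  have "coord u (\<Sum>j=1..CARD('n). c j *\<^sub>R u j) i = (\<Sum>j=1..CARD('n). if i = j then c j else 0)"
    using assms by (simp add: coord_sum coord_scaleR coord_basis if_distrib cong: if_cong)
  also have "\<dots> = c i" using assms by simp
  finally show ?thesis .
qed

lemma coord_bounded: "\<exists>K>0. \<forall>x. \<forall>i\<in>{1..CARD('n)}. \<bar>coord u x i\<bar> \<le> K * norm x"
proof -
  have "\<exists>K>0. \<forall>x. \<bar>coord u x i\<bar> \<le> K * norm x" for i
  proof -
    have "linear (\<lambda>x. coord u x i)"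
      by (rule linearI) (simp_all add: coord_add coord_scaleR)
    then obtain K where "K > 0" "\<And>x. norm (coord u x i) \<le> norm x * K"
      using bounded_linear.pos_bounded linear_conv_bounded_linear by blast
    then show ?thesis by (metis mult.commute real_norm_def)
  qed
  then obtain K where K: "\<And>i. K i > 0" "\<And>i x. \<bar>coord u x i\<bar> \<le> K i * norm x"
    by metis
  define K0 where "K0 = Max (K ` {1..CARD('n)})"
  have K_le: "K i \<le> K0" if "i \<in> {1..CARD('n)}" for i
    using that by (simp add: K0_def)
  then have "\<bar>coord u x i\<bar> \<le> K0 * norm x" if "i \<in> {1..CARD('n)}" for x i
    using K(2) that by (meson mult_right_mono norm_ge_zero order_trans)
  moreover have "K0 > 0"
    using K(1)[of 1] K_le[of 1] by simp
  ultimately show ?thesis by blast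
qed

end

section \<open>Lattices given by a basis\<close>

locale based_lattice =
  fixes L :: "(real ^ 'n) set" and b :: "nat \<Rightarrow> real ^ 'n"
  assumes L_basis: "lattice_basis L b"
begin

abbreviation int_comb :: "(nat \<Rightarrow> int) \<Rightarrow> real ^ 'n" where
  "int_comb c \<equiv> \<Sum>s=1..CARD('n). of_int (c s) *\<^sub>R b s"

lemma lattice_mem_iff: "x \<in> L \<longleftrightarrow> (\<exists>c::nat \<Rightarrow> int. x = int_comb c)"
  using L_basis by (auto simp: lattice_basis_def)

lemma lattice_zero: "0 \<in> L"
  unfolding lattice_mem_iff by (rule exI[of _ "\<lambda>_. 0"]) simp

lemma lattice_add:
  assumes "x \<in> L" "y \<in> L"
  shows "x + y \<in> L"
proof -
  obtain c d where "x = int_comb c"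
    "y = int_comb d"
    using assms unfolding lattice_mem_iff by blast
  then have "x + y = int_comb (\<lambda>s. c s + d s)"
    by (simp add: sum.distrib scaleR_add_left)
  then show ?thesis unfolding lattice_mem_iff by (intro exI[of _ "\<lambda>s. c s + d s"])
qed

lemma lattice_scale_int:
  assumes "x \<in> L"
  shows "of_int k *\<^sub>R x \<in> L"
proof -
  obtain c where "x = int_comb c"
    using assms unfolding lattice_mem_iff by blast
  then have "of_int k *\<^sub>R x = int_comb (\<lambda>s. k * c s)"
    by (simp add: scaleR_sum_right)
  then show ?thesis unfolding lattice_mem_iff by (intro exI[of _ "\<lambda>s. k * c s"])
qed

lemma lattice_diff: "x \<in> L \<Longrightarrow> y \<in> L \<Longrightarrow> x - y \<in> L"
  using lattice_add[of x "of_int (-1) *\<^sub>R y"] lattice_scale_int[of y "-1"] by simp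

lemma lattice_int_combination:
  "(\<And>i. i \<in> J \<Longrightarrow> x i \<in> L) \<Longrightarrow> (\<Sum>i\<in>J. of_int (k i) *\<^sub>R x i) \<in> L"
  by (induction J rule: infinite_finite_induct) (auto intro: lattice_zero lattice_add lattice_scale_int)

lemma lattice_basis_mem:
  assumes "j \<in> {1..CARD('n)}"
  shows "b j \<in> L"
proof -
  have "int_comb (\<lambda>s. if s = j then 1 else 0) =
        (\<Sum>s=1..CARD('n). if s = j then b s else 0)"
    by (rule sum.cong) auto
  then have "b j = int_comb (\<lambda>s. if s = j then 1 else 0)"
    using assms by simp
  then show ?thesis unfolding lattice_mem_iff by (intro exI[of _ "\<lambda>s. if s = j then 1 else 0"])
qed

lemma lattice_coeff_bound:
  "\<exists>K>0. \<forall>c i. i \<in> {1..CARD('n)} \<longrightarrow> \<bar>of_int (c i)\<bar> \<le> K * norm (int_comb c)"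
proof -
  have ib: "indexed_basis b" using L_basis by (simp add: lattice_basis_iff)
  then obtain K where
    K: "K > 0" "\<And>x i. i \<in> {1..CARD('n)} \<Longrightarrow> \<bar>coord b x i\<bar> \<le> K * norm x"
    using coord_bounded by blast
  moreover have "\<bar>of_int (c i)\<bar> \<le> K * norm (int_comb c)"
    if "i \<in> {1..CARD('n)}" for c :: "nat \<Rightarrow> int" and i
    using K(2)[OF that, of "int_comb c"] coord_combination[OF ib that, of "\<lambda>s. of_int (c s)"]
    by simp
  ultimately show ?thesis by blast
qed

lemma lattice_discrete: "\<exists>e>0. \<forall>x\<in>L. x \<noteq> 0 \<longrightarrow> e \<le> norm x"
proof -
  obtain K where K: "K > 0"
    "\<And>c i. i \<in> {1..CARD('n)} \<Longrightarrow> \<bar>of_int (c i)\<bar> \<le> K * norm (int_comb c)"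
    using lattice_coeff_bound by blast
  have "1 / K \<le> norm x" if x: "x \<in> L" "x \<noteq> 0" for x
  proof -
    obtain c where c: "x = int_comb c"
      using x(1) unfolding lattice_mem_iff by blast
    have "\<exists>i\<in>{1..CARD('n)}. c i \<noteq> 0"
    proof (rule ccontr)
      assume "\<not> ?thesis"
      then have "x = 0" unfolding c by (intro sum.neutral) auto
      with x(2) show False by simp
    qed
    then obtain i where i: "i \<in> {1..CARD('n)}" "c i \<noteq> 0" by blast
    have "1 \<le> \<bar>real_of_int (c i)\<bar>" using i(2) by linarith
    also have "\<dots> \<le> K * norm x" using K(2)[OF i(1)] c by simp
    finally show ?thesis using K(1) by (simp add: field_simps)
  qed
  moreover have "1 / K > 0" using K(1) by simp
  ultimately show ?thesis by blast
qed

lemma lattice_finite_cball: "finite (L \<inter> cball 0 R)"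
proof -
  obtain K where K: "K > 0"
    "\<And>c i. i \<in> {1..CARD('n)} \<Longrightarrow> \<bar>of_int (c i)\<bar> \<le> K * norm (int_comb c)"
    using lattice_coeff_bound by blast
  define N where "N = \<lceil>K * R\<rceil>"
    have "L \<inter> cball 0 R \<subseteq> int_comb ` (PiE {1..CARD('n)} (\<lambda>_. {-N..N}))"
  proof
    fix x assume x: "x \<in> L \<inter> cball 0 R"
    then obtain c where c: "x = int_comb c" unfolding Int_iff lattice_mem_iff by blast
    have "x = int_comb (restrict c {1..CARD('n)})" unfolding c by (rule sum.cong) auto
    moreover have "\<bar>c i\<bar> \<le> N" if "i \<in> {1..CARD('n)}" for i
    proof -
      have "\<bar>of_int (c i)\<bar> \<le> K * norm x"
        using K(2)[OF that, of c] c by simp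
      also have "\<dots> \<le> K * R"
        using x K(1) by (intro mult_left_mono) auto
      finally have "\<bar>of_int (c i)\<bar> \<le> K * R" .
      then show ?thesis unfolding N_def by linarith
    qed
    then have "restrict c {1..CARD('n)} \<in> PiE {1..CARD('n)} (\<lambda>_. {-N..N})"
      by (force simp: abs_le_iff)
    ultimately show "x \<in> int_comb ` (PiE {1..CARD('n)} (\<lambda>_. {-N..N}))" by (rule image_eqI)
  qed
  moreover have "finite (int_comb ` (PiE {1..CARD('n)} (\<lambda>_. {-N..N})))"
    by (intro finite_imageI finite_PiE) auto
  ultimately show ?thesis by (rule finite_subset)
qed

end

section \<open>Successive minima\<close>

definition succ_min_radii :: "(real ^ 'n) set \<Rightarrow> nat \<Rightarrow> real set" where
  "succ_min_radii L s = {r. r > 0 \<and> (\<exists>S. S \<subseteq> L \<inter> ball 0 r \<and> independent S \<and> card S = s)}"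

lemma succ_min_eq_Inf: "succ_min L s = Inf (succ_min_radii L s)"
  by (simp add: succ_min_def succ_min_radii_def)

context based_lattice
begin

lemma succ_min_radii_nonempty:
  assumes "s \<le> CARD('n)"
  shows "succ_min_radii L s \<noteq> {}"
proof -
  define r where "r = 1 + (\<Sum>j=1..CARD('n). norm (b j))"
  have sub: "{1..s} \<subseteq> {1..CARD('n)}" using assms by auto
  have ib: "indexed_basis b" using L_basis by (simp add: lattice_basis_iff)
  have "norm (b j) < r" if "j \<in> {1..CARD('n)}" for j
    using member_le_sum[OF that, of "\<lambda>j. norm (b j)"] by (simp add: r_def)
  then have "b ` {1..s} \<subseteq> L \<inter> ball 0 r"
    using sub lattice_basis_mem by auto
  moreover have "independent (b ` {1..s})"
    by (rule independent_mono[of "b ` {1..CARD('n)}"]) (use ib sub in \<open>auto simp: indexed_basis_def\<close>)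
  moreover have "card (b ` {1..s}) = s"
    using ib sub card_image[OF inj_on_subset, of b "{1..CARD('n)}" "{1..s}"]
    by (simp add: indexed_basis_def)
  moreover have "r > 0" unfolding r_def by (simp add: add_pos_nonneg sum_nonneg)
  ultimately have "r \<in> succ_min_radii L s" unfolding succ_min_radii_def by blast
  then show ?thesis by blast
qed

lemma succ_min_radii_lower_bound: "\<exists>e>0. \<forall>s\<ge>1. \<forall>r\<in>succ_min_radii L s. e \<le> r"
proof -
  obtain e where e: "e > 0" "\<And>x. x \<in> L \<Longrightarrow> x \<noteq> 0 \<Longrightarrow> e \<le> norm x"
    using lattice_discrete by blast
  have "e \<le> r" if s: "s \<ge> 1" and r: "r \<in> succ_min_radii L s" for s r
  proof -
    obtain S where S: "S \<subseteq> L \<inter> ball 0 r" "independent S" "card S = s"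
      using r unfolding succ_min_radii_def by blast
    then obtain x where "x \<in> S" using s by fastforce
    then show ?thesis using S e(2)[of x] dependent_zero[of S] by fastforce
  qed
  then show ?thesis using e(1) by blast
qed

lemma succ_min_pos:
  assumes "s \<in> {1..CARD('n)}"
  shows "succ_min L s > 0"
proof -
  obtain e where "e > 0" "\<And>r. r \<in> succ_min_radii L s \<Longrightarrow> e \<le> r"
    using succ_min_radii_lower_bound assms by auto
  then show ?thesis
    using cInf_greatest[OF succ_min_radii_nonempty] assms
    by (fastforce simp: succ_min_eq_Inf)
qed

lemma succ_min_mono:
  assumes "1 \<le> i" "i \<le> s" "s \<le> CARD('n)"
  shows "succ_min L i \<le> succ_min L s"
proof -
  have "succ_min_radii L s \<subseteq> succ_min_radii L i"
  proof
    fix r assume "r \<in> succ_min_radii L s"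
    then obtain S where S: "r > 0" "S \<subseteq> L \<inter> ball 0 r" "independent S" "card S = s"
      unfolding succ_min_radii_def by blast
    obtain T where "T \<subseteq> S" "card T = i"
      using obtain_subset_with_card_n[of i S] S(4) assms(2) by metis
    then show "r \<in> succ_min_radii L i"
      unfolding succ_min_radii_def using S independent_mono by blast
  qed
  moreover have "bdd_below (succ_min_radii L i)"
    using succ_min_radii_lower_bound assms(1) unfolding bdd_below_def by blast
  ultimately show ?thesis unfolding succ_min_eq_Inf
    by (intro cInf_superset_mono succ_min_radii_nonempty) (use assms in auto)
qed

lemma succ_min_witness:
  assumes "s \<in> {1..CARD('n)}"
  shows "\<exists>S. S \<subseteq> L \<inter> ball 0 (2 * succ_min L s) \<and> independent S \<and> card S = s"
proof -
  have "Inf (succ_min_radii L s) < 2 * succ_min L s"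
    using succ_min_pos[OF assms] by (simp add: succ_min_eq_Inf)
  then obtain r where r: "r \<in> succ_min_radii L s" "r < 2 * succ_min L s"
    using cInf_lessD[OF succ_min_radii_nonempty] assms by auto
  then obtain S where "S \<subseteq> L \<inter> ball 0 r" "independent S" "card S = s"
    unfolding succ_min_radii_def by blast
  moreover have "ball 0 r \<subseteq> ball (0 :: real ^ 'n) (2 * succ_min L s)" using r(2) by auto
  ultimately show ?thesis by blast
qed

lemma short_independent_lattice_vectors:
  assumes "k \<le> CARD('n)"
  shows "\<exists>u. inj_on u {1..k} \<and> independent (u ` {1..k}) \<and>
             (\<forall>s\<in>{1..k}. u s \<in> L \<and> norm (u s) < 2 * succ_min L s)"
  using assms
proof (induction k)
  case 0
  show ?case by (simp add: independent_empty)
next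
  case (Suc k)
  then obtain u where u: "inj_on u {1..k}" "independent (u ` {1..k})"
      "\<forall>s\<in>{1..k}. u s \<in> L \<and> norm (u s) < 2 * succ_min L s"
    by auto
  obtain S where S: "S \<subseteq> L \<inter> ball 0 (2 * succ_min L (Suc k))" "independent S" "card S = Suc k"
    using succ_min_witness[of "Suc k"] Suc.prems by auto
  have "\<not> S \<subseteq> span (u ` {1..k})"
  proof
    assume "S \<subseteq> span (u ` {1..k})"
    then have "card S \<le> dim (span (u ` {1..k}))" using S(2) by (rule independent_card_le_dim)
    also have "\<dots> = k" using u(1,2) by (simp add: dim_eq_card_independent card_image)
    finally show False using S(3) by simp
  qed
  then obtain y where y: "y \<in> S" "y \<notin> span (u ` {1..k})" by blast
  define u' where "u' = u(Suc k := y)"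
  have ins: "{1..Suc k} = insert (Suc k) {1..k}" by (simp add: atLeastAtMostSuc_conv)
  have u'_eq: "u' s = u s" if "s \<in> {1..k}" for s using that by (simp add: u'_def)
  have img_k: "u' ` {1..k} = u ` {1..k}" using u'_eq by (rule image_cong[OF refl])
  have u'_new: "u' (Suc k) = y" by (simp add: u'_def)
  have img: "u' ` {1..Suc k} = insert y (u ` {1..k})"
    unfolding ins image_insert img_k u'_new ..
  have "y \<notin> u ` {1..k}" using y(2) by (auto intro: span_base)
  then have "inj_on u' {1..Suc k}"
    unfolding ins inj_on_insert using u(1) inj_on_cong[of "{1..k}" u' u] u'_eq img_k u'_new by simp
  moreover have "independent (u' ` {1..Suc k})"
    unfolding img using y(2) u(2) by (rule independent_insertI)
  moreover have "u' s \<in> L \<and> norm (u' s) < 2 * succ_min L s" if "s \<in> {1..Suc k}" for s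
    using that u(3) S(1) y(1) u'_new unfolding ins by (auto simp: u'_eq)
  ultimately show ?case by blast
qed

lemma short_lattice_vector_basis:
  obtains u where "indexed_basis u"
    "\<And>s. s \<in> {1..CARD('n)} \<Longrightarrow> u s \<in> L"
    "\<And>s. s \<in> {1..CARD('n)} \<Longrightarrow> norm (u s) < 2 * succ_min L s"
proof -
  obtain u where "inj_on u {1..CARD('n)}" "independent (u ` {1..CARD('n)})"
    "\<forall>s\<in>{1..CARD('n)}. u s \<in> L \<and> norm (u s) < 2 * succ_min L s"
    using short_independent_lattice_vectors[OF order_refl] by blast
  then show thesis by (intro that) (auto simp: indexed_basis_def)
qed

end

section \<open>Lattice bases adapted to a flag\<close>

lemma nz_idx_subset_add_multiple:
  fixes p q :: "real ^ 'n"
  obtains m :: nat where "m \<le> CARD('n)" "nz_idx p \<subseteq> nz_idx (q + real m *\<^sub>R p)"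
proof -
  define f where "f h = - q $ h / p $ h" for h
  have "card (range f) < card (real ` {0..CARD('n)})"
    using card_image_le[of UNIV f] by (simp add: card_image)
  then have "\<not> real ` {0..CARD('n)} \<subseteq> range f"
    using card_mono[of "range f" "real ` {0..CARD('n)}"] by auto
  then obtain m where m: "m \<le> CARD('n)" "real m \<notin> range f" by fastforce
  have "h \<in> nz_idx (q + real m *\<^sub>R p)" if "h \<in> nz_idx p" for h
  proof (rule ccontr)
    assume "h \<notin> nz_idx (q + real m *\<^sub>R p)"
    then have "real m = f h" using that by (simp add: nz_idx_def f_def field_simps)
    with m(2) show False by auto
  qed
  with m(1) show thesis by (intro that) auto
qed

text \<open>For a basis \<open>u\<close>, \<open>in_flag u s x\<close> means \<open>x \<in> span {u 1, ..., u s}\<close>.\<close>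

definition in_flag :: "(nat \<Rightarrow> real ^ 'n) \<Rightarrow> nat \<Rightarrow> real ^ 'n \<Rightarrow> bool" where
  "in_flag u s x \<longleftrightarrow> (\<forall>i\<in>{1..CARD('n)}. s < i \<longrightarrow> coord u x i = 0)"

definition coord_group :: "(real ^ 'n) set \<Rightarrow> (nat \<Rightarrow> real ^ 'n) \<Rightarrow> nat \<Rightarrow> real set" where
  "coord_group L u s = {coord u x s | x. x \<in> L \<and> in_flag u s x}"

definition flag_adapted :: "(real ^ 'n) set \<Rightarrow> (nat \<Rightarrow> real ^ 'n) \<Rightarrow> nat \<Rightarrow> (nat \<Rightarrow> real ^ 'n) \<Rightarrow> bool" where
  "flag_adapted L u j v \<longleftrightarrow>
     (\<forall>i\<in>{1..j}. v i \<in> L \<and> in_flag u i (v i) \<and> coord u (v i) i > 0 \<and>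
        (\<forall>g\<in>coord_group L u i. \<exists>k::int. g = of_int k * coord u (v i) i))"

locale flagged_lattice = based_lattice L b for L :: "(real ^ 'n) set" and b +
  fixes u :: "nat \<Rightarrow> real ^ 'n"
  assumes u_basis: "indexed_basis u" and u_mem: "\<And>s. s \<in> {1..CARD('n)} \<Longrightarrow> u s \<in> L"
begin

lemmas coord_u_linear =
  coord_add[OF u_basis] coord_diff[OF u_basis] coord_scaleR[OF u_basis] coord_sum[OF u_basis]

lemma in_flag_0: "in_flag u 0 x \<Longrightarrow> x = 0"
  using coord_expansion[OF u_basis, of x] by (simp add: in_flag_def)

lemma in_flag_prev:
  assumes "in_flag u (Suc j) x" "coord u x (Suc j) = 0"
  shows "in_flag u j x"
  unfolding in_flag_def
proof (intro ballI impI)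
  fix i assume "i \<in> {1..CARD('n)}" "j < i"
  then show "coord u x i = 0" using assms by (cases "i = Suc j") (auto simp: in_flag_def)
qed

lemma norm_le_sum_flag_basis:
  assumes "in_flag u s x" "s \<le> CARD('n)" "\<And>i. i \<in> {1..s} \<Longrightarrow> \<bar>coord u x i\<bar> \<le> 1"
  shows "norm x \<le> (\<Sum>i=1..s. norm (u i))"
proof -
  have "(\<Sum>i=1..CARD('n). coord u x i *\<^sub>R u i) = (\<Sum>i=1..s. coord u x i *\<^sub>R u i)"
    using assms(1,2) by (intro sum.mono_neutral_right) (auto simp: in_flag_def)
  then have "norm x = norm (\<Sum>i=1..s. coord u x i *\<^sub>R u i)"
    using coord_expansion[OF u_basis, of x] by simp
  also have "\<dots> \<le> (\<Sum>i=1..s. \<bar>coord u x i\<bar> * norm (u i))"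
    by (rule norm_sum[THEN order_trans]) simp
  also have "\<dots> \<le> (\<Sum>i=1..s. norm (u i))"
    using assms(3) by (intro sum_mono) (simp add: mult_left_le_one_le)
  finally show ?thesis .
qed

lemma reduce_mod_flag:
  assumes "x \<in> L" "in_flag u s x" "s \<in> {1..CARD('n)}"
  obtains x' where "x' \<in> L" "in_flag u s x'" "coord u x' s = coord u x s"
    "\<And>i. i \<in> {1..<s} \<Longrightarrow> 0 \<le> coord u x' i \<and> coord u x' i < 1"
proof -
  define x' where "x' = x - (\<Sum>i\<in>{1..<s}. of_int \<lfloor>coord u x i\<rfloor> *\<^sub>R u i)"
  have "x' \<in> L"
    unfolding x'_def using assms(1,3) u_mem by (intro lattice_diff lattice_int_combination) auto
  have coord_x': "coord u x' j = coord u x j - (if j < s then of_int \<lfloor>coord u x j\<rfloor> else 0)"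
    if "j \<in> {1..CARD('n)}" for j
  proof -
    have "(\<Sum>i\<in>{1..<s}. of_int \<lfloor>coord u x i\<rfloor> * coord u (u i) j) =
          (\<Sum>i\<in>{1..<s}. if i = j then of_int \<lfloor>coord u x i\<rfloor> else 0)"
      using that assms(3) by (intro sum.cong) (auto simp: coord_basis[OF u_basis])
    then show ?thesis
      using that by (simp add: x'_def coord_u_linear)
  qed
  show thesis
  proof
    show "x' \<in> L" by fact
    show "in_flag u s x'" using assms(2) by (simp add: in_flag_def coord_x')
    show "coord u x' s = coord u x s" using coord_x'[OF assms(3)] by simp
    show "0 \<le> coord u x' i \<and> coord u x' i < 1" if "i \<in> {1..<s}" for i
      using that assms(3) coord_x'[of i] by auto linarith+
  qed
qed

lemma coord_group_diff_int:
  assumes "g \<in> coord_group L u s" "h \<in> coord_group L u s"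
  shows "g - of_int k * h \<in> coord_group L u s"
proof -
  obtain x y where "x \<in> L" "in_flag u s x" "g = coord u x s" "y \<in> L" "in_flag u s y" "h = coord u y s"
    using assms unfolding coord_group_def by blast
  then have "x - of_int k *\<^sub>R y \<in> L \<and> in_flag u s (x - of_int k *\<^sub>R y) \<and>
             g - of_int k * h = coord u (x - of_int k *\<^sub>R y) s"
    by (auto simp: lattice_diff lattice_scale_int in_flag_def coord_u_linear)
  then show ?thesis unfolding coord_group_def by blast
qed

lemma one_mem_coord_group:
  assumes "s \<in> {1..CARD('n)}"
  shows "1 \<in> coord_group L u s"
proof -
  have "u s \<in> L \<and> in_flag u s (u s) \<and> 1 = coord u (u s) s"
    using assms u_mem by (auto simp: in_flag_def coord_basis[OF u_basis])
  then show ?thesis unfolding coord_group_def by blast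
qed

lemma finite_coord_group_unit_interval:
  assumes "s \<in> {1..CARD('n)}"
  shows "finite (coord_group L u s \<inter> {0<..1})"
proof -
  define R where "R = (\<Sum>i=1..s. norm (u i))"
  have "coord_group L u s \<inter> {0<..1} \<subseteq> (\<lambda>x. coord u x s) ` (L \<inter> cball 0 R)"
  proof
    fix g assume "g \<in> coord_group L u s \<inter> {0<..1}"
    then obtain x where x: "x \<in> L" "in_flag u s x" "g = coord u x s" "0 < g" "g \<le> 1"
      unfolding coord_group_def by auto
    obtain x' where x': "x' \<in> L" "in_flag u s x'" "coord u x' s = coord u x s"
      "\<And>i. i \<in> {1..<s} \<Longrightarrow> 0 \<le> coord u x' i \<and> coord u x' i < 1"
      using reduce_mod_flag[OF x(1,2) assms] by blast
    have "norm x' \<le> R"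
      unfolding R_def
    proof (rule norm_le_sum_flag_basis[OF x'(2)])
      show "s \<le> CARD('n)" using assms by simp
      show "\<bar>coord u x' i\<bar> \<le> 1" if "i \<in> {1..s}" for i
        using that x(3-5) x'(3) x'(4)[of i] by (cases "i = s") auto
    qed
    then show "g \<in> (\<lambda>x. coord u x s) ` (L \<inter> cball 0 R)"
      using x(3) x'(1,3) by (intro image_eqI[of _ _ x']) auto
  qed
  then show ?thesis using lattice_finite_cball finite_surj by blast
qed

lemma coord_group_generator:
  assumes "s \<in> {1..CARD('n)}"
  obtains t where "0 < t" "t \<le> 1" "t \<in> coord_group L u s"
    "\<And>g. g \<in> coord_group L u s \<Longrightarrow> \<exists>k::int. g = of_int k * t"
proof -
  let ?F = "coord_group L u s \<inter> {0<..1}"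
  define t where "t = Min ?F"
  have "1 \<in> ?F" using one_mem_coord_group[OF assms] by simp
  then have t: "t \<in> ?F" "\<And>g. g \<in> ?F \<Longrightarrow> t \<le> g"
    using finite_coord_group_unit_interval[OF assms] unfolding t_def
    by (auto intro!: Min_in simp del: Int_iff)
  have "\<exists>k::int. g = of_int k * t" if g: "g \<in> coord_group L u s" for g
  proof -
    define k where "k = \<lfloor>g / t\<rfloor>"
    have "0 < t" using t(1) by simp
    moreover have "of_int k \<le> g / t" "g / t < of_int k + 1" unfolding k_def by linarith+
    ultimately have r: "0 \<le> g - of_int k * t" "g - of_int k * t < t"
      by (simp_all add: field_simps)
    have "g - of_int k * t \<in> coord_group L u s"
      using coord_group_diff_int g t(1) by blast
    moreover have "g - of_int k * t \<notin> ?F"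
      using r(2) t(2) by (meson not_le)
    ultimately have "g - of_int k * t = 0"
      using r t(1) by auto
    then show ?thesis by auto
  qed
  with t(1) show thesis by (intro that) auto
qed

lemma flag_adapted_int_span:
  assumes "flag_adapted L u j v" "j \<le> CARD('n)" "z \<in> L" "in_flag u j z"
  shows "\<exists>c::nat \<Rightarrow> int. z = (\<Sum>i=1..j. of_int (c i) *\<^sub>R v i)"
  using assms
proof (induction j arbitrary: z)
  case 0
  then show ?case using in_flag_0 by simp
next
  case (Suc j)
  let ?s = "Suc j" and ?t = "coord u (v (Suc j)) (Suc j)"
  have s: "?s \<in> {1..CARD('n)}" using Suc.prems(2) by simp
  have v: "v ?s \<in> L" "in_flag u ?s (v ?s)" "?t > 0"
    "\<And>g. g \<in> coord_group L u ?s \<Longrightarrow> \<exists>k::int. g = of_int k * ?t"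
    using Suc.prems(1) by (auto simp: flag_adapted_def)
  have "coord u z ?s \<in> coord_group L u ?s"
    using Suc.prems(3,4) unfolding coord_group_def by blast
  then obtain c where c: "coord u z ?s = of_int c * ?t" using v(4) by blast
  define z' where "z' = z - of_int c *\<^sub>R v ?s"
  have "in_flag u ?s z'"
    using Suc.prems(4) v(2) by (simp add: in_flag_def z'_def coord_u_linear)
  moreover have "coord u z' ?s = 0"
    using c by (simp add: z'_def coord_u_linear)
  ultimately have "in_flag u j z'" by (rule in_flag_prev)
  moreover have "z' \<in> L" unfolding z'_def using Suc.prems(3) v(1) by (intro lattice_diff lattice_scale_int)
  moreover have "flag_adapted L u j v" using Suc.prems(1) by (simp add: flag_adapted_def)
  ultimately obtain r where r: "z' = (\<Sum>i=1..j. of_int (r i) *\<^sub>R v i)"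
    using Suc.IH Suc.prems(2) by force
  have "(\<Sum>i=1..?s. of_int ((r(?s := c)) i) *\<^sub>R v i) = z' + of_int c *\<^sub>R v ?s"
    by (simp add: r)
  then show ?case unfolding z'_def by (metis diff_add_cancel)
qed

lemma lattice_basis_if_flag_adapted:
  assumes "flag_adapted L u CARD('n) v"
  shows "lattice_basis L v"
proof -
  have vL: "v i \<in> L" if "i \<in> {1..CARD('n)}" for i
    using assms that by (simp add: flag_adapted_def)
  have comb: "\<exists>c::nat \<Rightarrow> int. z = (\<Sum>i=1..CARD('n). of_int (c i) *\<^sub>R v i)" if "z \<in> L" for z
    using flag_adapted_int_span[OF assms order_refl that] by (simp add: in_flag_def)
  have "L = {(\<Sum>s=1..CARD('n). of_int (c s) *\<^sub>R v s) | c :: nat \<Rightarrow> int. True}"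
    using comb vL lattice_int_combination by blast
  moreover have "u ` {1..CARD('n)} \<subseteq> span (v ` {1..CARD('n)})"
  proof
    fix x assume "x \<in> u ` {1..CARD('n)}"
    then obtain c :: "nat \<Rightarrow> int" where x: "x = (\<Sum>i=1..CARD('n). of_int (c i) *\<^sub>R v i)"
      using comb u_mem by blast
    show "x \<in> span (v ` {1..CARD('n)})"
      unfolding x by (intro span_sum span_scale span_base imageI)
  qed
  then have "span (v ` {1..CARD('n)}) = UNIV"
    using span_minimal[OF _ subspace_span] indexed_basis_span[OF u_basis] by blast
  ultimately show ?thesis
    by (simp add: lattice_basis_iff indexed_basis_if_spanning)
qed

lemma flag_adapted_step:
  assumes s: "Suc k \<in> {1..CARD('n)}" and p: "p \<in> L" "in_flag u k p"
  obtains w where "w \<in> L" "in_flag u (Suc k) w" "coord u w (Suc k) > 0"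
    "\<And>g. g \<in> coord_group L u (Suc k) \<Longrightarrow> \<exists>j::int. g = of_int j * coord u w (Suc k)"
    "norm w \<le> (\<Sum>i=1..Suc k. norm (u i)) + CARD('n) * norm p"
    "nz_idx p \<subseteq> nz_idx w"
proof -
  obtain t where t: "0 < t" "t \<le> 1" "t \<in> coord_group L u (Suc k)"
    "\<And>g. g \<in> coord_group L u (Suc k) \<Longrightarrow> \<exists>j::int. g = of_int j * t"
    using coord_group_generator[OF s] by blast
  then obtain x where x: "x \<in> L" "in_flag u (Suc k) x" "coord u x (Suc k) = t"
    unfolding coord_group_def by blast
  obtain x' where x': "x' \<in> L" "in_flag u (Suc k) x'" "coord u x' (Suc k) = t"
    "\<And>i. i \<in> {1..<Suc k} \<Longrightarrow> 0 \<le> coord u x' i \<and> coord u x' i < 1"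
    using reduce_mod_flag[OF x(1,2) s] x(3) by blast
  have norm_x': "norm x' \<le> (\<Sum>i=1..Suc k. norm (u i))"
  proof (rule norm_le_sum_flag_basis[OF x'(2)])
    show "Suc k \<le> CARD('n)" using s by simp
    show "\<bar>coord u x' i\<bar> \<le> 1" if "i \<in> {1..Suc k}" for i
      using that t(1,2) x'(3) x'(4)[of i] by (cases "i = Suc k") auto
  qed
  obtain m :: nat where m: "m \<le> CARD('n)" "nz_idx p \<subseteq> nz_idx (x' + real m *\<^sub>R p)"
    by (rule nz_idx_subset_add_multiple)
  define w where "w = x' + real m *\<^sub>R p"
  have coord_w: "coord u w i = coord u x' i" if "i \<in> {1..CARD('n)}" "k < i" for i
    using p(2) that by (simp add: w_def in_flag_def coord_u_linear)
  show thesis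
  proof
    show "w \<in> L"
      unfolding w_def using x'(1) p(1) lattice_scale_int[of p "int m"] by (simp add: lattice_add)
    show "in_flag u (Suc k) w" using x'(2) coord_w by (simp add: in_flag_def)
    show "coord u w (Suc k) > 0" using coord_w[OF s] x'(3) t(1) by simp
    show "\<exists>j::int. g = of_int j * coord u w (Suc k)" if "g \<in> coord_group L u (Suc k)" for g
      using coord_w[OF s] x'(3) t(4)[OF that] by simp
    have "norm w \<le> norm x' + real m * norm p"
      unfolding w_def using norm_triangle_ineq[of x' "real m *\<^sub>R p"] by simp
    also have "\<dots> \<le> (\<Sum>i=1..Suc k. norm (u i)) + CARD('n) * norm p"
      using norm_x' m(1) by (intro add_mono mult_right_mono) auto
    finally show "norm w \<le> (\<Sum>i=1..Suc k. norm (u i)) + CARD('n) * norm p" .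
    show "nz_idx p \<subseteq> nz_idx w" using m(2) by (simp add: w_def)
  qed
qed

lemma short_flag_adapted_family:
  assumes short: "\<And>s. s \<in> {1..CARD('n)} \<Longrightarrow> norm (u s) < 2 * succ_min L s"
    and "k \<le> CARD('n)"
  shows "\<exists>v. flag_adapted L u k v \<and>
             (\<forall>s\<in>{1..k}. norm (v s) \<le> (3 * real CARD('n)) ^ s * succ_min L s) \<and>
             (\<forall>s\<in>{1..<k}. nz_idx (v s) \<subseteq> nz_idx (v (Suc s)))"
  using assms(2)
proof (induction k)
  case 0
  show ?case by (simp add: flag_adapted_def)
next
  case (Suc k)
  let ?K = "3 * real CARD('n)" and ?l = "succ_min L (Suc k)"
  obtain v where v: "flag_adapted L u k v" "\<forall>s\<in>{1..k}. norm (v s) \<le> ?K ^ s * succ_min L s"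
    "\<forall>s\<in>{1..<k}. nz_idx (v s) \<subseteq> nz_idx (v (Suc s))"
    using Suc by auto
  have s: "Suc k \<in> {1..CARD('n)}" using Suc.prems by simp
  have l_pos: "?l > 0" using succ_min_pos[OF s] .
  have K_ge_1: "1 \<le> ?K" using s by simp
  define p where "p = (if k = 0 then 0 else v k)"
  have "p \<in> L \<and> in_flag u k p \<and> norm p \<le> ?K ^ k * ?l"
  proof (cases "k = 0")
    case True
    then show ?thesis
      using lattice_zero l_pos by (simp_all add: p_def in_flag_def coord_zero)
  next
    case False
    then have "k \<in> {1..k}" by simp
    then have "v k \<in> L" "in_flag u k (v k)" "norm (v k) \<le> ?K ^ k * succ_min L k"
      using v(1,2) by (auto simp: flag_adapted_def)
    moreover have "succ_min L k \<le> ?l" using False s by (intro succ_min_mono) auto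
    ultimately show ?thesis
      using False by (auto simp: p_def intro: order_trans mult_left_mono)
  qed
  then have p: "p \<in> L" "in_flag u k p" "norm p \<le> ?K ^ k * ?l" by auto
  obtain w where w: "w \<in> L" "in_flag u (Suc k) w" "coord u w (Suc k) > 0"
    "\<And>g. g \<in> coord_group L u (Suc k) \<Longrightarrow> \<exists>j::int. g = of_int j * coord u w (Suc k)"
    "norm w \<le> (\<Sum>i=1..Suc k. norm (u i)) + CARD('n) * norm p" "nz_idx p \<subseteq> nz_idx w"
    using flag_adapted_step[OF s p(1,2)] by blast
  have "(\<Sum>i=1..Suc k. norm (u i)) \<le> (\<Sum>i=1..Suc k. 2 * ?l)"
  proof (rule sum_mono)
    fix i assume "i \<in> {1..Suc k}"
    then have "norm (u i) < 2 * succ_min L i" "succ_min L i \<le> ?l"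
      using short s succ_min_mono[of i "Suc k"] by auto
    then show "norm (u i) \<le> 2 * ?l" by simp
  qed
  also have "\<dots> \<le> 2 * CARD('n) * ?l" using s l_pos by simp
  finally have sum_u: "(\<Sum>i=1..Suc k. norm (u i)) \<le> 2 * CARD('n) * ?l" .
  have "norm w \<le> 2 * CARD('n) * ?l + CARD('n) * (?K ^ k * ?l)"
    using w(5) sum_u mult_left_mono[OF p(3), of "real CARD('n)"] by linarith
  also have "\<dots> \<le> 2 * CARD('n) * (?K ^ k * ?l) + CARD('n) * (?K ^ k * ?l)"
    using one_le_power[OF K_ge_1, of k] l_pos by (intro add_right_mono mult_left_mono) auto
  also have "\<dots> = ?K ^ Suc k * ?l" by (simp add: algebra_simps)
  finally have norm_w: "norm w \<le> ?K ^ Suc k * ?l" .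
  define v' where "v' = v(Suc k := w)"
  have "flag_adapted L u (Suc k) v'"
    using v(1) w(1-4) by (auto simp: flag_adapted_def v'_def le_Suc_eq)
  moreover have "\<forall>s\<in>{1..Suc k}. norm (v' s) \<le> ?K ^ s * succ_min L s"
  proof
    fix s assume "s \<in> {1..Suc k}"
    then show "norm (v' s) \<le> ?K ^ s * succ_min L s"
      using v(2) norm_w by (cases "s = Suc k") (auto simp: v'_def)
  qed
  moreover have "\<forall>s\<in>{1..<Suc k}. nz_idx (v' s) \<subseteq> nz_idx (v' (Suc s))"
    using v(3) w(6) by (auto simp: v'_def p_def less_Suc_eq)
  ultimately show ?case by blast
qed

end

context based_lattice
begin

lemma short_nested_lattice_basis:
  "\<exists>v. lattice_basis L v \<and>
       (\<forall>s\<in>{1..CARD('n)}. norm (v s) \<le> (3 * real CARD('n)) ^ CARD('n) * succ_min L s) \<and>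
       (\<forall>s\<in>{1..<CARD('n)}. nz_idx (v s) \<subseteq> nz_idx (v (s + 1)))"
proof -
  let ?K = "3 * real CARD('n)"
  obtain u where u: "indexed_basis u" "\<And>s. s \<in> {1..CARD('n)} \<Longrightarrow> u s \<in> L"
    "\<And>s. s \<in> {1..CARD('n)} \<Longrightarrow> norm (u s) < 2 * succ_min L s"
    using short_lattice_vector_basis by blast
  interpret flagged_lattice L b u
    using u(1,2) by unfold_locales
  obtain v where v: "flag_adapted L u CARD('n) v"
    "\<forall>s\<in>{1..CARD('n)}. norm (v s) \<le> ?K ^ s * succ_min L s"
    "\<forall>s\<in>{1..<CARD('n)}. nz_idx (v s) \<subseteq> nz_idx (v (Suc s))"
    using short_flag_adapted_family[OF u(3) order_refl] by blast
  have "norm (v s) \<le> ?K ^ CARD('n) * succ_min L s" if s: "s \<in> {1..CARD('n)}" for s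
  proof -
    have "norm (v s) \<le> ?K ^ s * succ_min L s" using v(2) s by blast
    also have "\<dots> \<le> ?K ^ CARD('n) * succ_min L s"
      using s succ_min_pos[OF s] by (intro mult_right_mono power_increasing) auto
    finally show ?thesis .
  qed
  then show ?thesis
    using lattice_basis_if_flag_adapted[OF v(1)] v(3) by auto
qed

end

theorem lemma3p2:
  "\<exists>C :: real. C > 0 \<and> (\<forall>L :: (real ^ 'n) set. full_rank_lattice L \<longrightarrow>
     (\<exists>v. lattice_basis L v \<and>
          (\<forall>s\<in>{1..CARD('n)}. norm (v s) \<le> C * succ_min L s) \<and>
          (\<forall>s\<in>{1..<CARD('n)}. nz_idx (v s) \<subseteq> nz_idx (v (s + 1)))))"
proof (rule exI[of _ "(3 * real CARD('n)) ^ CARD('n)"], intro conjI allI impI)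
  show "(3 * real CARD('n)) ^ CARD('n) > 0" by simp
  fix L :: "(real ^ 'n) set"
  assume "full_rank_lattice L"
  then obtain b where "lattice_basis L b" unfolding full_rank_lattice_def by blast
  then show "\<exists>v. lattice_basis L v \<and>
          (\<forall>s\<in>{1..CARD('n)}. norm (v s) \<le> (3 * real CARD('n)) ^ CARD('n) * succ_min L s) \<and>
          (\<forall>s\<in>{1..<CARD('n)}. nz_idx (v s) \<subseteq> nz_idx (v (s + 1)))"
    by (rule based_lattice.short_nested_lattice_basis[unfolded based_lattice_def])
qed

end
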